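(* Let $r,s\ge0$, and let $b_i=\prod_{\mathcal F}b_i^{(n)}$ ($1\le i\le r$) and $c_j=\prod_{\mathcal F}c_j^{(n)}$ ($1\le j\le s$) be complex numbers written as ultraproducts of elements $b_i^{(n)},c_j^{(n)}\in\Bbbk$. Then for every central character $\psi$ of $U(\mathfrak{gl}_t)$ there exist central characters $\psi^{(n)}$ of $U(\mathfrak{gl}_n(\Bbbk))$ with $\psi=\prod_{\mathcal F}\psi^{(n)}$ such that $\psi^{(n)}(C_k)=0$ for all $k\ge1$ when $n\le r+s$, and such that for every $n>r+s$, $\psi^{(n)}$ is the central character by which $Z(U(\mathfrak{gl}_n(\Bbbk)))$ acts on some Verma module $M_{\mu^{(n)}}$ with $$\mu^{(n)}_i=b_i^{(n)}\ (1\le i\le r),\qquad \mu^{(n)}_{n-j+1}=c_j^{(n)}\ (1\le j\le s).$$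
   Context: $\Bbbk=\overline{\mathbb Q}$; $\mathcal F$ is a fixed nonprincipal ultrafilter on $\mathbb N$ with a fixed field isomorphism $\prod_{\mathcal F}\Bbbk\simeq\mathbb C$, and $t$ is the image of $\prod_{\mathcal F}n$. For $\mathfrak{gl}_n(\Bbbk)$, $M_\lambda=U(\mathfrak{gl}_n)\otimes_{U(\mathfrak b)}\Bbbk_{\lambda-\rho}$ ($\mathfrak b$ upper triangular Borel, $\rho$ half-sum of positive roots), and $C_k\in Z(U(\mathfrak{gl}_n(\Bbbk)))$ ($k\ge1$) is the central element acting on every $M_\lambda$ by $\sum_i\lambda_i^k$. In $U(\mathfrak{gl}_t)$ (the universal enveloping algebra of $\mathfrak{gl}_t=V\otimes V^*$ in Deligne's category $\operatorname{Rep}(GL_t)$, realized as an ultraproduct of the $U(\mathfrak{gl}_n(\Bbbk))$), $C_k=\prod_{\mathcal F}C_k$ and $Z(U(\mathfrak{gl}_t))=\mathbb C[C_1,C_2,\ldots]$, so a central character $\psi$ is the same as an arbitrary sequence $\psi_k=\psi(C_k)\in\mathbb C$. For central characters $\psi^{(n)}$ of $\mathfrak{gl}_n(\Bbbk)$, $\psi=\prod_{\mathcal F}\psi^{(n)}$ means $\psi(C_k)=\prod_{\mathcal F}\psi^{(n)}(C_k)$ for all $k\ge1$. *)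

theory Defs
  imports "HOL-Computational_Algebra.Polynomial"
begin

text \<open>The field k = algebraic closure of Q, modelled as the algebraic complex numbers.\<close>
definition kbar :: "complex set" where
  "kbar = {z. algebraic z}"

definition kseqs :: "(nat \<Rightarrow> complex) set" where
  "kseqs = {x. \<forall>n. x n \<in> kbar}"

definition nonprincipal_ultrafilter :: "nat filter \<Rightarrow> bool" where
  "nonprincipal_ultrafilter F \<longleftrightarrow> F \<noteq> bot \<and>
     (\<forall>P. eventually P F \<or> eventually (\<lambda>n. \<not> P n) F) \<and>
     (\<forall>m. eventually (\<lambda>n. n \<noteq> m) F)"

text \<open>theta is (induced by) a field isomorphism from the ultraproduct of copies of k
  along F onto the complex numbers: a ring homomorphism on k-valued sequences,
  surjective onto C, whose fibres are exactly the F-equivalence classes.\<close>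
definition ultraproduct_iso :: "nat filter \<Rightarrow> ((nat \<Rightarrow> complex) \<Rightarrow> complex) \<Rightarrow> bool" where
  "ultraproduct_iso F \<theta> \<longleftrightarrow> nonprincipal_ultrafilter F \<and>
     (\<forall>x\<in>kseqs. \<forall>y\<in>kseqs. \<theta> (\<lambda>n. x n + y n) = \<theta> x + \<theta> y) \<and>
     (\<forall>x\<in>kseqs. \<forall>y\<in>kseqs. \<theta> (\<lambda>n. x n * y n) = \<theta> x * \<theta> y) \<and>
     \<theta> (\<lambda>n. 1) = 1 \<and>
     (\<forall>x\<in>kseqs. \<forall>y\<in>kseqs. \<theta> x = \<theta> y \<longleftrightarrow> eventually (\<lambda>n. x n = y n) F) \<and>
     (\<forall>z. \<exists>x\<in>kseqs. \<theta> x = z)"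

text \<open>Central character of the Verma module M_mu of gl_n(k), recorded via its values on
  the generators C_k (k \<ge> 1): C_k acts by sum_i mu_i^k.\<close>
definition verma_cc :: "nat \<Rightarrow> (nat \<Rightarrow> complex) \<Rightarrow> nat \<Rightarrow> complex" where
  "verma_cc n \<mu> k = (\<Sum>i=1..n. \<mu> i ^ k)"

text \<open>A central character of gl_n(k), recorded via its values chi k = chi(C_k), k \<ge> 1
  (these determine it, as Z(U(gl_n)) is generated by the C_k); by Harish-Chandra every
  central character is that of some Verma module M_lambda with lambda in k^n.\<close>
definition central_char_gl :: "nat \<Rightarrow> (nat \<Rightarrow> complex) \<Rightarrow> bool" where
  "central_char_gl n \<chi> \<longleftrightarrow>
     (\<exists>la. (\<forall>i\<in>{1..n}. la i \<in> kbar) \<and> (\<forall>k\<ge>1. \<chi> k = verma_cc n la k))"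

end

(*
  Fix representatives rep k of the values psi k. For n > r + s only the n - r - s middle entries
  of the weight are free, and K = floor_sqrt (n - r - s) of them can be chosen so that the first
  K power sums of the weight equal rep 1 n, ..., rep K n: appending the j distinct j-th roots of
  a / j changes the k-th power sum by 0 for 0 < k < j and by a for k = j, so the power sums can be
  corrected one after the other, using 1 + 2 + ... + K entries. Since K tends to infinity along
  the nonprincipal ultrafilter, for each k the value of the n-th central character on C_k equals
  rep k n for almost all n, so the ultraproduct is psi k. All entries are algebraic because the
  algebraic numbers form a field that is closed under taking roots.
*)

theory Submission
  imports Defs "HOL-Algebra.Algebraic_Closure_Type" "HOL-Library.Discrete_Functions"
begin

(* Closure of the algebraic numbers under + and * is taken from HOL-Algebra, where the algebraic
   elements over a subfield form a subfield. *)
abbreviation complex_ring :: "complex ring" where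
  "complex_ring \<equiv> ring_of_type_algebra"

lemma complex_ring_simps [simp]:
  "carrier complex_ring = UNIV" "mult complex_ring = (*)" "add complex_ring = (+)"
  "zero complex_ring = 0" "one complex_ring = 1"
  by (auto simp: ring_of_type_algebra_def)

lemma complex_ring_pow [simp]: "x [^]\<^bsub>complex_ring\<^esub> (n::nat) = x ^ n"
  by (induction n) auto

lemma complex_ring_uminus [simp]: "\<ominus>\<^bsub>complex_ring\<^esub> x = - x"
proof -
  interpret field complex_ring by (rule field_from_type_algebra)
  show ?thesis by (rule minus_equality) auto
qed

lemma complex_ring_inverse [simp]: "x \<noteq> 0 \<Longrightarrow> inv\<^bsub>complex_ring\<^esub> x = inverse x"
proof -
  interpret field complex_ring by (rule field_from_type_algebra)
  show "x \<noteq> 0 \<Longrightarrow> ?thesis" by (intro comm_inv_char) auto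
qed

lemma complex_ring_eval: "ring.eval complex_ring L x = poly (Poly (rev L)) x"
proof -
  interpret field complex_ring by (rule field_from_type_algebra)
  show ?thesis
    by (induction L) (simp_all add: Poly_append poly_monom algebra_simps)
qed

lemma Rats_subfield_complex_ring: "subfield \<rat> complex_ring"
proof -
  interpret field complex_ring by (rule field_from_type_algebra)
  show ?thesis
    by (rule subfieldI'[OF subringI]) auto
qed

lemma algebraic_iff_algebraic_over_Rats:
  "algebraic x \<longleftrightarrow> ring.algebraic complex_ring \<rat> x"
proof -
  interpret field complex_ring by (rule field_from_type_algebra)
  (* HOL-Algebra polynomials are coefficient lists with the leading coefficient first. *)
  have polys: "L \<in> carrier (\<rat>[X]\<^bsub>complex_ring\<^esub>) \<longleftrightarrow> set L \<subseteq> \<rat> \<and> (L = [] \<or> hd L \<noteq> 0)" for L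
    unfolding univ_poly_carrier[symmetric] polynomial_def by auto
  have "Polynomial.algebraic x \<longleftrightarrow> (\<exists>L \<in> carrier (\<rat>[X]\<^bsub>complex_ring\<^esub>). L \<noteq> [] \<and> eval L x = 0)"
  proof
    assume "Polynomial.algebraic x"
    then obtain p where p: "\<And>i. Polynomial.coeff p i \<in> \<rat>" "p \<noteq> 0" "poly p x = 0"
      by (auto simp: algebraic_altdef)
    have "set (rev (coeffs p)) \<subseteq> \<rat>"
      using p(1) by (auto simp: coeffs_def)
    then show "\<exists>L \<in> carrier (\<rat>[X]\<^bsub>complex_ring\<^esub>). L \<noteq> [] \<and> eval L x = 0"
      using p(2,3) by (intro bexI[of _ "rev (coeffs p)"])
        (auto simp: polys hd_rev last_coeffs_eq_coeff_degree complex_ring_eval)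
  next
    assume "\<exists>L \<in> carrier (\<rat>[X]\<^bsub>complex_ring\<^esub>). L \<noteq> [] \<and> eval L x = 0"
    then obtain L where L: "set L \<subseteq> \<rat>" "hd L \<noteq> 0" "L \<noteq> []" "eval L x = 0"
      by (auto simp: polys)
    have "Polynomial.coeff (Poly (rev L)) i \<in> \<rat>" for i
      using L(1) nth_mem[of i "rev L"] by (auto simp: nth_default_def)
    moreover have "Poly (rev L) \<noteq> 0"
      using L(2,3) by (cases L) (auto simp: Poly_eq_0 dest!: arg_cong[where f = set] split: if_splits)
    ultimately show "Polynomial.algebraic x"
      using L(4) by (intro algebraicI') (auto simp: complex_ring_eval)
  qed
  also have "\<dots> \<longleftrightarrow> (algebraic over \<rat>) x"
    using algebraicI[of _ \<rat> x] algebraicE[OF subfieldE(1)[OF Rats_subfield_complex_ring], of x]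
    by auto
  finally show ?thesis
    by (simp add: over_def)
qed

lemma algebraic_plus: "algebraic x \<Longrightarrow> algebraic y \<Longrightarrow> algebraic (x + y :: complex)"
  and algebraic_times: "algebraic x \<Longrightarrow> algebraic y \<Longrightarrow> algebraic (x * y :: complex)"
proof -
  interpret field complex_ring by (rule field_from_type_algebra)
  have "subring {x. Polynomial.algebraic x} complex_ring"
    using subfieldE(1)[OF subfield_of_algebraics[OF Rats_subfield_complex_ring]]
    by (simp add: algebraic_iff_algebraic_over_Rats over_def)
  from subringE(6,7)[OF this]
  show "Polynomial.algebraic x \<Longrightarrow> Polynomial.algebraic y \<Longrightarrow> Polynomial.algebraic (x + y)"
    and "Polynomial.algebraic x \<Longrightarrow> Polynomial.algebraic y \<Longrightarrow> Polynomial.algebraic (x * y)"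
    by auto
qed

lemma algebraic_power: "algebraic x \<Longrightarrow> algebraic (x ^ n :: complex)"
  by (induction n) (auto intro: algebraic_times)

lemma algebraic_sum: "(\<And>i. i \<in> A \<Longrightarrow> algebraic (f i)) \<Longrightarrow> algebraic (\<Sum>i\<in>A. f i :: complex)"
  by (induction A rule: infinite_finite_induct) (auto intro: algebraic_plus)

lemma algebraic_sum_list:
  "(\<And>z. z \<in> set L \<Longrightarrow> algebraic (f z)) \<Longrightarrow> algebraic (\<Sum>z\<leftarrow>L. f z :: complex)"
  by (induction L) (auto intro: algebraic_plus)

lemma algebraic_power_imp_algebraic:
  assumes "algebraic ((z :: complex) ^ n)" "n > 0"
  shows "algebraic z"
proof (rule algebraic_root[OF assms(1)])
  show "poly (Polynomial.monom 1 n) z = z ^ n"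
    by (simp add: poly_monom)
  show "\<forall>i. Polynomial.coeff (Polynomial.monom 1 n) i \<in> \<int>"
    by (simp add: coeff_monom)
  show "Polynomial.lead_coeff (Polynomial.monom (1 :: complex) n) = 1"
    and "Polynomial.degree (Polynomial.monom (1 :: complex) n) > 0"
    using assms(2) by (simp_all add: degree_monom_eq)
qed

definition croot :: "nat \<Rightarrow> complex \<Rightarrow> complex" where
  "croot n c = of_real (root n (norm c)) * cis (Arg c / n)"

lemma croot_power:
  assumes "n > 0"
  shows "croot n c ^ n = c"
proof -
  have "croot n c ^ n = of_real (root n (norm c) ^ n) * cis (Arg c)"
    unfolding of_real_power using assms by (simp add: croot_def power_mult_distrib DeMoivre)
  also have "root n (norm c) ^ n = norm c"
    using assms by simp
  finally show ?thesis
    by (cases "c = 0") (simp_all add: cis_Arg Complex.sgn_eq)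
qed

lemma cis_root_of_unity_power_ne_1:
  fixes k n :: nat
  assumes "0 < k" "k < n"
  shows "cis (2 * pi / n) ^ k \<noteq> 1"
proof
  assume "cis (2 * pi / n) ^ k = 1"
  then have "cis (2 * pi * real k / real n) = cis (2 * pi * real 0 / real n)"
    by (simp add: DeMoivre mult.commute)
  moreover have "inj_on (\<lambda>k. cis (2 * pi * real k / real n)) {..<n}"
    using bij_betw_roots_unity[of n] assms by (simp add: bij_betw_def)
  ultimately show False
    using assms inj_onD[of "\<lambda>k. cis (2 * pi * real k / real n)" "{..<n}" k 0] by simp
qed

definition power_sum :: "complex list \<Rightarrow> nat \<Rightarrow> complex" where
  "power_sum L k = (\<Sum>z\<leftarrow>L. z ^ k)"

lemma power_sum_append [simp]: "power_sum (L @ M) k = power_sum L k + power_sum M k"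
  by (simp add: power_sum_def)

lemma power_sum_rev [simp]: "power_sum (rev L) k = power_sum L k"
  by (simp add: power_sum_def flip: rev_map)

lemma power_sum_replicate_0 [simp]: "k \<ge> 1 \<Longrightarrow> power_sum (replicate m 0) k = 0"
  by (cases k) (simp_all add: power_sum_def sum_list_replicate)

lemma power_sum_map_upt: "power_sum (map f [1..<Suc m]) k = (\<Sum>i=1..m. f i ^ k)"
  by (simp add: power_sum_def atLeastLessThanSuc_atLeastAtMost del: upt_Suc
      flip: sum_set_upt_conv_sum_list_nat)

lemma algebraic_power_sum: "(\<And>z. z \<in> set L \<Longrightarrow> algebraic z) \<Longrightarrow> algebraic (power_sum L k)"
  unfolding power_sum_def by (intro algebraic_sum_list algebraic_power)

definition root_block :: "nat \<Rightarrow> complex \<Rightarrow> complex list" where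
  "root_block n a = map (\<lambda>l. croot n (a / n) * cis (2 * pi / n) ^ l) [0..<n]"

lemma length_root_block [simp]: "length (root_block n a) = n"
  by (simp add: root_block_def)

lemma power_root_block:
  assumes "z \<in> set (root_block n a)"
  shows "z ^ n = a / n"
proof -
  obtain l where z: "z = croot n (a / n) * cis (2 * pi / n) ^ l" and "l \<in> {0..<n}"
    using assms unfolding root_block_def set_map set_upt by blast
  then have "n > 0" by simp
  have "z ^ n = croot n (a / n) ^ n * (cis (2 * pi / n) ^ n) ^ l"
    unfolding z by (simp add: power_mult_distrib flip: power_mult mult.commute)
  also have "cis (2 * pi / n) ^ n = 1"
    using \<open>n > 0\<close> by (simp add: DeMoivre)
  finally show ?thesis
    using croot_power[OF \<open>n > 0\<close>] by simp
qed

lemma algebraic_root_block: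
  assumes "algebraic a" "z \<in> set (root_block n a)"
  shows "algebraic z"
proof (rule algebraic_power_imp_algebraic)
  show "algebraic (z ^ n)"
    using assms by (simp add: power_root_block divide_inverse algebraic_times algebraic_inverse)
  show "n > 0"
    using assms(2) by (auto simp: root_block_def)
qed

lemma power_sum_root_block:
  assumes "1 \<le> k" "k \<le> n"
  shows "power_sum (root_block n a) k = (if k = n then a else 0)"
proof -
  define w where "w = croot n (a / n)"
  define \<omega> where "\<omega> = cis (2 * pi / n)"
  have "\<omega> ^ n = 1"
    using assms by (simp add: \<omega>_def DeMoivre)
  have "power_sum (root_block n a) k = (\<Sum>l<n. (w * \<omega> ^ l) ^ k)"
    by (simp add: power_sum_def root_block_def w_def \<omega>_def lessThan_atLeast0
        flip: sum_set_upt_conv_sum_list_nat)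
  also have "\<dots> = w ^ k * (\<Sum>l<n. (\<omega> ^ k) ^ l)"
    by (simp add: sum_distrib_left power_mult_distrib flip: power_mult mult.commute)
  finally have sum_eq: "power_sum (root_block n a) k = w ^ k * (\<Sum>l<n. (\<omega> ^ k) ^ l)" .
  show ?thesis
  proof (cases "k = n")
    case True
    then show ?thesis
      using sum_eq \<open>\<omega> ^ n = 1\<close> croot_power[of n "a / n"] assms by (simp add: w_def)
  next
    case False
    then have "\<omega> ^ k \<noteq> 1"
      using cis_root_of_unity_power_ne_1[of k n] assms by (simp add: \<omega>_def)
    moreover have "(\<omega> ^ k) ^ n = (\<omega> ^ n) ^ k"
      by (metis power_mult mult.commute)
    ultimately have "(\<Sum>l<n. (\<omega> ^ k) ^ l) = 0"
      using geometric_sum[of "\<omega> ^ k" n] \<open>\<omega> ^ n = 1\<close> by simp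
    then show ?thesis
      using sum_eq False by simp
  qed
qed

fun power_sum_solution :: "(nat \<Rightarrow> complex) \<Rightarrow> nat \<Rightarrow> complex list" where
  "power_sum_solution p 0 = []"
| "power_sum_solution p (Suc K) = power_sum_solution p K @
     root_block (Suc K) (p (Suc K) - power_sum (power_sum_solution p K) (Suc K))"

lemma power_sum_power_sum_solution:
  "1 \<le> k \<Longrightarrow> k \<le> K \<Longrightarrow> power_sum (power_sum_solution p K) k = p k"
proof (induction K)
  case 0
  then show ?case by simp
next
  case (Suc K)
  then show ?case
    using power_sum_root_block[of k "Suc K"] by (cases "k = Suc K") simp_all
qed

lemma length_power_sum_solution: "2 * length (power_sum_solution p K) = K * (K + 1)"
  by (induction K) (simp_all add: algebra_simps)

lemma algebraic_power_sum_solution: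
  "(\<And>k. algebraic (p k)) \<Longrightarrow> z \<in> set (power_sum_solution p K) \<Longrightarrow> algebraic z"
proof (induction K arbitrary: z)
  case 0
  then show ?case by simp
next
  case (Suc K)
  have "algebraic (p (Suc K) - power_sum (power_sum_solution p K) (Suc K))"
    unfolding diff_conv_add_uminus
    by (intro algebraic_plus algebraic_minus algebraic_power_sum Suc.prems Suc.IH)
  then show ?case
    using Suc algebraic_root_block by auto
qed

definition weight_of_list :: "complex list \<Rightarrow> nat \<Rightarrow> complex" where
  "weight_of_list W i = W ! (i - 1)"

lemma verma_cc_weight_of_list: "verma_cc (length W) (weight_of_list W) k = power_sum W k"
proof -
  have "verma_cc (length W) (weight_of_list W) k = (\<Sum>i<length W. W ! i ^ k)"
    unfolding verma_cc_def weight_of_list_def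
    by (rule sum.reindex_bij_witness[where i = Suc and j = "\<lambda>i. i - 1"]) auto
  then show ?thesis
    by (simp add: power_sum_def sum_list_sum_nth atLeast0LessThan)
qed

lemma verma_weight_with_prescribed_ends_and_power_sums:
  assumes n: "r + s + K\<^sup>2 \<le> n"
    and B: "\<forall>i\<in>{1..r}. B i \<in> kbar" and C: "\<forall>j\<in>{1..s}. C j \<in> kbar"
    and p: "\<forall>k. p k \<in> kbar"
  shows "\<exists>\<mu>. (\<forall>i\<in>{1..n}. \<mu> i \<in> kbar) \<and> (\<forall>i\<in>{1..r}. \<mu> i = B i) \<and>
           (\<forall>j\<in>{1..s}. \<mu> (n - j + 1) = C j) \<and> (\<forall>k\<in>{1..K}. verma_cc n \<mu> k = p k)"
proof -
  define ends where "ends k = (\<Sum>i=1..r. B i ^ k) + (\<Sum>j=1..s. C j ^ k)" for k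
  define L where "L = power_sum_solution (\<lambda>k. p k - ends k) K"
  define W where "W = map B [1..<Suc r] @ L @ replicate (n - r - s - length L) 0 @
                      rev (map C [1..<Suc s])"
  have "2 * length L \<le> 2 * K\<^sup>2"
    unfolding L_def length_power_sum_solution power2_eq_square by (simp add: algebra_simps)
  then have length_W: "length W = n"
    using n by (simp add: W_def del: upt_Suc)
  have "algebraic (p k - ends k)" for k
    using p B C unfolding ends_def diff_conv_add_uminus kbar_def
    by (intro algebraic_plus algebraic_minus algebraic_sum algebraic_power) auto
  then have "z \<in> kbar" if "z \<in> set W" for z
    using that B C algebraic_power_sum_solution[of "\<lambda>k. p k - ends k"]
    by (auto simp: W_def L_def kbar_def simp del: upt_Suc)
  then have "\<forall>i\<in>{1..n}. weight_of_list W i \<in> kbar"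
    using length_W by (auto simp: weight_of_list_def)
  moreover have "\<forall>i\<in>{1..r}. weight_of_list W i = B i"
    by (auto simp: weight_of_list_def W_def nth_append simp del: upt_Suc)
  moreover have "\<forall>j\<in>{1..s}. weight_of_list W (n - j + 1) = C j"
    using length_W by (auto simp: weight_of_list_def W_def nth_append rev_nth simp del: upt_Suc)
  moreover have "\<forall>k\<in>{1..K}. verma_cc n (weight_of_list W) k = p k"
  proof
    fix k assume k: "k \<in> {1..K}"
    have "verma_cc n (weight_of_list W) k = power_sum W k"
      by (simp flip: length_W add: verma_cc_weight_of_list)
    also have "\<dots> = power_sum (map B [1..<Suc r]) k + power_sum L k + power_sum (map C [1..<Suc s]) k"
      using k by (simp add: W_def del: upt_Suc)
    also have "\<dots> = ends k + power_sum L k"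
      unfolding ends_def power_sum_map_upt by simp
    also have "power_sum L k = p k - ends k"
      using k unfolding L_def by (simp add: power_sum_power_sum_solution)
    finally show "verma_cc n (weight_of_list W) k = p k"
      by simp
  qed
  ultimately show ?thesis
    by blast
qed

lemma verma_weights_with_prescribed_ends_and_power_sums:
  assumes "\<forall>i\<in>{1..r}. \<forall>n. b i n \<in> kbar" "\<forall>j\<in>{1..s}. \<forall>n. c j n \<in> kbar" "\<forall>k. p k \<in> kseqs"
  shows "\<exists>\<mu>. \<forall>n>r+s. (\<forall>i\<in>{1..n}. \<mu> n i \<in> kbar) \<and> (\<forall>i\<in>{1..r}. \<mu> n i = b i n) \<and>
           (\<forall>j\<in>{1..s}. \<mu> n (n - j + 1) = c j n) \<and>
           (\<forall>k\<in>{1..floor_sqrt (n - r - s)}. verma_cc n (\<mu> n) k = p k n)"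
proof (intro choice allI)
  fix n
  show "\<exists>\<mu>. r + s < n \<longrightarrow> (\<forall>i\<in>{1..n}. \<mu> i \<in> kbar) \<and> (\<forall>i\<in>{1..r}. \<mu> i = b i n) \<and>
           (\<forall>j\<in>{1..s}. \<mu> (n - j + 1) = c j n) \<and>
           (\<forall>k\<in>{1..floor_sqrt (n - r - s)}. verma_cc n \<mu> k = p k n)"
  proof (cases "r + s < n")
    case True
    then have "r + s + (floor_sqrt (n - r - s))\<^sup>2 \<le> n"
      using floor_sqrt_power2_le[of "n - r - s"] by linarith
    then show ?thesis
      using verma_weight_with_prescribed_ends_and_power_sums[of r s _ n "\<lambda>i. b i n" "\<lambda>j. c j n"
          "\<lambda>k. p k n"] assms
      unfolding kseqs_def by auto
  qed simp
qed

lemma central_char_gl_in_kbar: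
  assumes "central_char_gl n \<chi>" "k \<ge> 1"
  shows "\<chi> k \<in> kbar"
  using assms unfolding central_char_gl_def verma_cc_def kbar_def
  by (auto intro!: algebraic_sum algebraic_power)

lemma nonprincipal_ultrafilter_eventually_ge:
  assumes "nonprincipal_ultrafilter F"
  shows "eventually (\<lambda>n. N \<le> n) F"
proof (induction N)
  case (Suc N)
  moreover have "eventually (\<lambda>n. n \<noteq> N) F"
    using assms unfolding nonprincipal_ultrafilter_def by blast
  ultimately show ?case
    by eventually_elim auto
qed simp

lemma ultraproduct_iso_eventually_eq:
  assumes "ultraproduct_iso F \<theta>" "x \<in> kseqs" "y \<in> kseqs" "eventually (\<lambda>n. x n = y n) F"
  shows "\<theta> x = \<theta> y"
  using assms unfolding ultraproduct_iso_def by blast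


theorem lemma8:
  fixes F :: "nat filter" and \<theta> :: "(nat \<Rightarrow> complex) \<Rightarrow> complex"
    and r s :: nat
    and b c :: "nat \<Rightarrow> nat \<Rightarrow> complex"
    and \<psi> :: "nat \<Rightarrow> complex"
  assumes iso: "ultraproduct_iso F \<theta>"
    and b_k: "\<forall>i\<in>{1..r}. \<forall>n. b i n \<in> kbar"
    and c_k: "\<forall>j\<in>{1..s}. \<forall>n. c j n \<in> kbar"
  shows "\<exists>\<Psi> :: nat \<Rightarrow> nat \<Rightarrow> complex.
           (\<forall>n. central_char_gl n (\<Psi> n)) \<and>
           (\<forall>k\<ge>1. \<psi> k = \<theta> (\<lambda>n. \<Psi> n k)) \<and>
           (\<forall>n\<le>r+s. \<forall>k\<ge>1. \<Psi> n k = 0) \<and>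
           (\<forall>n>r+s. \<exists>\<mu> :: nat \<Rightarrow> complex.
               (\<forall>i\<in>{1..n}. \<mu> i \<in> kbar) \<and>
               (\<forall>i\<in>{1..r}. \<mu> i = b i n) \<and>
               (\<forall>j\<in>{1..s}. \<mu> (n - j + 1) = c j n) \<and>
               (\<forall>k\<ge>1. \<Psi> n k = verma_cc n \<mu> k))"
proof -
  have "\<forall>k. \<exists>x. x \<in> kseqs \<and> \<theta> x = \<psi> k"
    using iso unfolding ultraproduct_iso_def by blast
  from choice[OF this] obtain rep where rep: "\<forall>k. rep k \<in> kseqs \<and> \<theta> (rep k) = \<psi> k"
    by blast
  then obtain \<mu> where \<mu>: "\<forall>n>r+s. (\<forall>i\<in>{1..n}. \<mu> n i \<in> kbar) \<and> (\<forall>i\<in>{1..r}. \<mu> n i = b i n) \<and>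
      (\<forall>j\<in>{1..s}. \<mu> n (n - j + 1) = c j n) \<and>
      (\<forall>k\<in>{1..floor_sqrt (n - r - s)}. verma_cc n (\<mu> n) k = rep k n)"
    using verma_weights_with_prescribed_ends_and_power_sums[OF b_k c_k] by blast
  define \<Psi> where "\<Psi> n = verma_cc n (if n \<le> r + s then (\<lambda>_. 0) else \<mu> n)" for n
  have central: "central_char_gl n (\<Psi> n)" for n
    unfolding central_char_gl_def \<Psi>_def
    by (intro exI[of _ "if n \<le> r + s then (\<lambda>_. 0) else \<mu> n"]) (use \<mu> in \<open>auto simp: kbar_def\<close>)
  have limit: "\<psi> k = \<theta> (\<lambda>n. \<Psi> n k)" if "k \<ge> 1" for k
  proof -
    have "eventually (\<lambda>n. r + s + k\<^sup>2 + 1 \<le> n) F"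
      using iso by (intro nonprincipal_ultrafilter_eventually_ge) (simp add: ultraproduct_iso_def)
    then have "eventually (\<lambda>n. \<Psi> n k = rep k n) F"
      by eventually_elim (use \<mu> that in \<open>auto simp: \<Psi>_def le_floor_sqrt_iff\<close>)
    moreover have "(\<lambda>n. \<Psi> n k) \<in> kseqs"
      using central_char_gl_in_kbar[OF central that] by (simp add: kseqs_def)
    ultimately show ?thesis
      using ultraproduct_iso_eventually_eq[OF iso] rep by metis
  qed
  show ?thesis
  proof (intro exI[of _ \<Psi>] conjI allI impI)
    fix n assume "r + s < n"
    with \<mu> show "\<exists>\<mu>'. (\<forall>i\<in>{1..n}. \<mu>' i \<in> kbar) \<and> (\<forall>i\<in>{1..r}. \<mu>' i = b i n) \<and>
        (\<forall>j\<in>{1..s}. \<mu>' (n - j + 1) = c j n) \<and> (\<forall>k\<ge>1. \<Psi> n k = verma_cc n \<mu>' k)"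
      by (intro exI[of _ "\<mu> n"]) (auto simp: \<Psi>_def)
  qed (use central limit in \<open>auto simp: \<Psi>_def verma_cc_def\<close>)
qed

end
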